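(* Let $n>1$ be an integer with prime factorization $n=\prod_{i=1}^{\ell}p_i^{a_i}$, where $p_1<p_2<\cdots<p_\ell$ are primes, each $a_i\ge1$, and $a_\ell=1$. Suppose that \[ p_i-1=\prod_{j=1}^{i-1}p_j^{a_j}\quad\text{for }1\le i<\ell, \] and that $p_\ell+1=n/p_\ell$. Then $n$ is a prime power Giuga number.
   Context: A prime power Giuga number is a composite positive integer $n$ such that $\sum_{p^k\mid n}\frac{1}{p^k}-\frac1n$ is a positive integer, where the sum ranges over all prime powers $p^k$ ($p$ prime, $k\ge1$) dividing $n$. *)

theory Defs
  imports "HOL-Number_Theory.Number_Theory"
begin

definition pp_giuga :: "nat \<Rightarrow> bool" where
  "pp_giuga n \<longleftrightarrow> n > 1 \<and> \<not> prime n \<and>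
     (\<exists>m::int. m > 0 \<and>
        (\<Sum>q\<in>{q. primepow q \<and> q dvd n}. 1 / real q) - 1 / real n = real_of_int m)"

end

theory Submission imports Defs begin

text \<open>Write \<open>S m\<close> for the sum of \<open>1/q\<close> over the prime powers \<open>q\<close> dividing \<open>m\<close>; the partial
  products \<open>N\<^sub>i = \<Prod>\<^sub>j\<^sub><\<^sub>i p\<^sub>j^a\<^sub>j\<close> satisfy \<open>S N\<^sub>i = 1 - 1/N\<^sub>i\<close>. Indeed, if \<open>p = N + 1\<close> is prime, then
  \<open>S (N p\<^sup>a) = S N + (1 - p\<^sup>-\<^sup>a)/(p - 1) = 1 - 1/N + (1 - p\<^sup>-\<^sup>a)/N = 1 - 1/(N p\<^sup>a)\<close>.
  For the last prime \<open>p\<^sub>\<ell> = N\<^sub>\<ell> - 1\<close> one gets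
  \<open>S n - 1/n = 1 - 1/(p\<^sub>\<ell>+1) + 1/p\<^sub>\<ell> - 1/(p\<^sub>\<ell>(p\<^sub>\<ell>+1)) = 1\<close>.\<close>

definition primepow_recip_sum :: "nat \<Rightarrow> real" where
  "primepow_recip_sum m = (\<Sum>q\<in>{q. primepow q \<and> q dvd m}. 1 / real q)"

lemma primepow_recip_sum_1: "primepow_recip_sum 1 = 0"
proof -
  have "{q. primepow q \<and> q dvd (1::nat)} = {}"
    using primepow_gt_Suc_0 by fastforce
  thus ?thesis unfolding primepow_recip_sum_def by simp
qed

lemma primepow_divisors_mult_prime_power:
  fixes m p a :: nat
  assumes "prime p" "coprime p m"
  shows "{q. primepow q \<and> q dvd m * p ^ a} = {q. primepow q \<and> q dvd m} \<union> (\<lambda>k. p ^ k) ` {1..a}"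
proof (rule equalityI; rule subsetI)
  fix q assume "q \<in> {q. primepow q \<and> q dvd m * p ^ a}"
  then obtain r k where r: "prime r" "k > 0" "q = r ^ k" and d: "r ^ k dvd m * p ^ a"
    by (auto simp: primepow_def)
  show "q \<in> {q. primepow q \<and> q dvd m} \<union> (\<lambda>k. p ^ k) ` {1..a}"
  proof (cases "r = p")
    case True
    have "coprime (p ^ k) m" using assms(2) by simp
    hence "p ^ k dvd p ^ a" using d True coprime_dvd_mult_right_iff by metis
    hence "k \<le> a" using prime_gt_1_nat[OF assms(1)] power_dvd_imp_le by blast
    thus ?thesis using r True by auto
  next
    case False
    hence "coprime (r ^ k) (p ^ a)" using r(1) assms(1) by (simp add: primes_coprime)
    hence "r ^ k dvd m" using d coprime_dvd_mult_left_iff by blast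
    moreover have "primepow q" unfolding primepow_def using r by blast
    ultimately show ?thesis using r(3) by simp
  qed
next
  fix q assume "q \<in> {q. primepow q \<and> q dvd m} \<union> (\<lambda>k. p ^ k) ` {1..a}"
  thus "q \<in> {q. primepow q \<and> q dvd m * p ^ a}"
  proof
    assume "q \<in> (\<lambda>k. p ^ k) ` {1..a}"
    then obtain k where k: "1 \<le> k" "k \<le> a" "q = p ^ k" by auto
    have "primepow q"
      unfolding primepow_def using k assms(1) by (intro exI[of _ p] exI[of _ k]) simp
    moreover have "q dvd m * p ^ a" using k by (simp add: le_imp_power_dvd)
    ultimately show ?thesis by simp
  qed auto
qed

lemma primepow_recip_sum_mult_prime_power:
  fixes m p a :: nat
  assumes "prime p" "coprime p m" "m > 0"
  shows "primepow_recip_sum (m * p ^ a) = primepow_recip_sum m + (\<Sum>k=1..a. 1 / real p ^ k)"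
proof -
  have fin: "finite {q. primepow q \<and> q dvd m}"
    by (rule finite_subset[of _ "{..m}"]) (auto simp: dvd_imp_le assms(3))
  have disj: "{q. primepow q \<and> q dvd m} \<inter> (\<lambda>k. p ^ k) ` {1..a} = {}"
  proof (rule ccontr)
    assume "\<not> ?thesis"
    then obtain k where "k \<ge> 1" "p ^ k dvd m" by auto
    moreover have "p dvd p ^ k" using \<open>k \<ge> 1\<close> by simp
    ultimately have "p dvd m" using dvd_trans by blast
    hence "p = 1" using coprime_common_divisor_nat[OF assms(2) dvd_refl] by simp
    thus False using assms(1) by simp
  qed
  have inj: "inj_on (\<lambda>k. p ^ k) {1..a}"
    using prime_gt_1_nat[OF assms(1)] by (auto intro!: inj_onI)
  have "primepow_recip_sum (m * p ^ a)
      = primepow_recip_sum m + (\<Sum>q\<in>(\<lambda>k. p ^ k) ` {1..a}. 1 / real q)"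
    unfolding primepow_recip_sum_def primepow_divisors_mult_prime_power[OF assms(1,2)]
    by (rule sum.union_disjoint[OF fin _ disj]) auto
  also have "(\<Sum>q\<in>(\<lambda>k. p ^ k) ` {1..a}. 1 / real q) = (\<Sum>k=1..a. 1 / real p ^ k)"
    by (subst sum.reindex[OF inj]) simp
  finally show ?thesis .
qed

lemma sum_inverse_powers_times_pred:
  fixes x :: real
  assumes "x \<noteq> 0"
  shows "(\<Sum>k=1..a. 1 / x ^ k) * (x - 1) = 1 - 1 / x ^ a"
proof (induction a)
  case (Suc a)
  have "(\<Sum>k=1..Suc a. 1 / x ^ k) * (x - 1) = 1 - 1 / x ^ a + (x - 1) / x ^ Suc a"
    using Suc by (simp add: distrib_right)
  also have "\<dots> = 1 - 1 / x ^ Suc a" using assms by (simp add: field_simps)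
  finally show ?case .
qed simp

lemma primepow_recip_sum_mult_power_Suc:
  fixes N p a :: nat
  assumes "prime p" "p = N + 1" "primepow_recip_sum N = 1 - 1 / real N"
  shows "primepow_recip_sum (N * p ^ a) = 1 - 1 / real (N * p ^ a)"
proof -
  have N: "real N > 0" using prime_gt_1_nat[OF assms(1)] assms(2) by simp
  have "(\<Sum>k=1..a. 1 / real p ^ k) * real N = 1 - 1 / real p ^ a"
    using sum_inverse_powers_times_pred[of "real p" a] assms(2) by simp
  hence geom: "(\<Sum>k=1..a. 1 / real p ^ k) = (1 - 1 / real p ^ a) / real N"
    using N by (simp add: field_simps)
  have "primepow_recip_sum (N * p ^ a) = 1 - 1 / real N + (1 - 1 / real p ^ a) / real N"
    using primepow_recip_sum_mult_prime_power[of p N a] assms N geom by simp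
  also have "\<dots> = 1 - 1 / real (N * p ^ a)"
    using N assms(2) by (simp add: field_simps)
  finally show ?thesis .
qed

lemma primepow_recip_sum_prod_chain:
  fixes p a :: "nat \<Rightarrow> nat"
  assumes "\<And>i. i \<in> {1..<k} \<Longrightarrow> prime (p i)"
    and "\<And>i. i \<in> {1..<k} \<Longrightarrow> p i - 1 = (\<Prod>j=1..<i. p j ^ a j)"
  shows "primepow_recip_sum (\<Prod>j=1..<k. p j ^ a j) = 1 - 1 / real (\<Prod>j=1..<k. p j ^ a j)"
  using assms
proof (induction k)
  case (Suc k)
  show ?case
  proof (cases "k = 0")
    case False
    hence k: "k \<in> {1..<Suc k}" by simp
    define N where "N = (\<Prod>j=1..<k. p j ^ a j)"
    have "p k = N + 1"
      using Suc.prems[OF k] prime_gt_1_nat[OF Suc.prems(1)[OF k]] unfolding N_def by linarith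
    moreover have "primepow_recip_sum N = 1 - 1 / real N"
      unfolding N_def using Suc by simp
    ultimately have "primepow_recip_sum (N * p k ^ a k) = 1 - 1 / real (N * p k ^ a k)"
      using primepow_recip_sum_mult_power_Suc Suc.prems(1)[OF k] by blast
    thus ?thesis using False by (simp add: N_def prod.atLeastLessThan_Suc)
  qed (use primepow_recip_sum_1 in simp)
qed (use primepow_recip_sum_1 in simp)

lemma primepow_recip_sum_mult_pred:
  fixes N p :: nat
  assumes "prime p" "N = p + 1" "primepow_recip_sum N = 1 - 1 / real N"
  shows "primepow_recip_sum (N * p) - 1 / real (N * p) = 1"
proof -
  have "coprime p N" using assms(2) by simp
  hence "primepow_recip_sum (N * p) = 1 - 1 / real N + 1 / real p"
    using primepow_recip_sum_mult_prime_power[of p N 1] assms by simp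
  moreover have "real (N * p) = (real p + 1) * real p" "real N = real p + 1"
    using assms(2) by (simp_all add: algebra_simps)
  ultimately show ?thesis
    using prime_gt_0_nat[OF assms(1)] by (simp add: divide_simps) (simp add: algebra_simps)
qed

theorem lemma4:
  fixes n l :: nat and p a :: "nat \<Rightarrow> nat"
  assumes "n > 1"
    and "n = (\<Prod>i=1..l. p i ^ a i)"
    and "\<forall>i\<in>{1..l}. prime (p i)"
    and "\<forall>i\<in>{1..l}. \<forall>j\<in>{1..l}. i < j \<longrightarrow> p i < p j"
    and "\<forall>i\<in>{1..l}. a i \<ge> 1"
    and "a l = 1"
    and "\<forall>i\<in>{1..<l}. p i - 1 = (\<Prod>j=1..<i. p j ^ a j)"
    and "p l + 1 = n div p l"
  shows "pp_giuga n"
proof -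
  define N where "N = (\<Prod>j=1..<l. p j ^ a j)"
  have "l \<ge> 1" using assms(1,2) by (cases l) auto
  hence n: "n = N * p l"
    using assms(2,6) by (simp add: N_def atLeastLessThanSuc_atLeastAtMost[symmetric]
        prod.atLeastLessThan_Suc)
  have prime: "prime (p l)" using assms(3) \<open>l \<ge> 1\<close> by simp
  hence N_eq: "N = p l + 1" using assms(8) n prime_gt_0_nat by simp
  have "primepow_recip_sum N = 1 - 1 / real N"
    unfolding N_def using assms(3,7) by (intro primepow_recip_sum_prod_chain) auto
  hence "primepow_recip_sum n - 1 / real n = real_of_int 1"
    using primepow_recip_sum_mult_pred[OF prime N_eq] n by simp
  moreover have "\<not> prime n"
  proof
    assume "prime n"
    hence "N = 1 \<or> p l = 1" using n prime_product by blast
    thus False using N_eq prime by auto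
  qed
  ultimately show ?thesis
    unfolding pp_giuga_def primepow_recip_sum_def using assms(1) zero_less_one by blast
qed

end
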